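(* Let $\tau$ be a triangle function on $\Delta^+$ and $\gamma$ a $\sigma$-additive $\tau$-decomposable measure on a $\sigma$-ring $\Sigma$ of subsets of $\Omega\ne\emptyset$. If $E_n\in\Sigma$, $E_n\subseteq E_{n+1}$ for all $n$ and $\bigcup_n E_n=E$, then $\gamma_{E_n}\to\gamma_E$ weakly; i.e., $\gamma$ is continuous from below.
   Context: $\Delta^+$: functions $F:[-\infty,+\infty]\to[0,1]$ non-decreasing, left-continuous on $\mathbb{R}$, $F(x)=0$ for $x\le0$, $F(+\infty)=1$; $\varepsilon_0(x)=1$ if $x>0$, else $0$. A triangle function is a symmetric, associative map $\tau:\Delta^+\times\Delta^+\to\Delta^+$, non-decreasing in each variable, with identity $\varepsilon_0$; $\bigoplus_{k=1}^nG_k=\tau(G_1,\bigoplus_{k=2}^nG_k)$. Weak convergence: $G_n\to G$ iff $G_n(x)\to G(x)$ at every $x\in\mathbb{R}$ where $G$ is continuous; $\bigoplus_{n=1}^\infty G_n:=\lim_{n\to\infty}\bigoplus_{k=1}^nG_k$ (weak limit). A $\tau$-decomposable measure on a ring $\Sigma$ is $\gamma:\Sigma\to\Delta^+$ with $\gamma_\emptyset=\varepsilon_0$ and $\gamma_{E\cup F}=\tau(\gamma_E,\gamma_F)$ for disjoint $E,F\in\Sigma$. It is $\sigma$-additive (on a $\sigma$-ring) if $\gamma_{\bigcup_{n}E_n}=\bigoplus_{n=1}^\infty\gamma_{E_n}$ for every sequence of pairwise disjoint $E_n\in\Sigma$. It is continuous from below if $\gamma_{E_n}\to\gamma_E$ weakly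 whenever $E_n\subseteq E_{n+1}$, $\bigcup E_n=E$ in $\Sigma$. *)

theory Defs
  imports "HOL-Analysis.Analysis"
begin

type_synonym dfun = "ereal \<Rightarrow> real"

definition Delta_plus :: "dfun set" where
  "Delta_plus = {F. (\<forall>x. 0 \<le> F x \<and> F x \<le> 1)
                   \<and> mono F
                   \<and> (\<forall>x::real. ((\<lambda>t. F (ereal t)) \<longlongrightarrow> F (ereal x)) (at_left x))
                   \<and> (\<forall>x. x \<le> 0 \<longrightarrow> F x = 0)
                   \<and> F \<infinity> = 1}"

definition eps0 :: dfun where
  "eps0 x = (if x > 0 then 1 else 0)"

definition triangle_function :: "(dfun \<Rightarrow> dfun \<Rightarrow> dfun) \<Rightarrow> bool" where
  "triangle_function \<tau> \<longleftrightarrow>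
     (\<forall>F\<in>Delta_plus. \<forall>G\<in>Delta_plus. \<tau> F G \<in> Delta_plus)
   \<and> (\<forall>F\<in>Delta_plus. \<forall>G\<in>Delta_plus. \<tau> F G = \<tau> G F)
   \<and> (\<forall>F\<in>Delta_plus. \<forall>G\<in>Delta_plus. \<forall>H\<in>Delta_plus. \<tau> F (\<tau> G H) = \<tau> (\<tau> F G) H)
   \<and> (\<forall>F\<in>Delta_plus. \<forall>G\<in>Delta_plus. \<forall>H\<in>Delta_plus. F \<le> G \<longrightarrow> \<tau> F H \<le> \<tau> G H)
   \<and> (\<forall>F\<in>Delta_plus. \<tau> F eps0 = F)"

fun tsum_from :: "(dfun \<Rightarrow> dfun \<Rightarrow> dfun) \<Rightarrow> (nat \<Rightarrow> dfun) \<Rightarrow> nat \<Rightarrow> nat \<Rightarrow> dfun" where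
  "tsum_from \<tau> G k 0 = eps0"
| "tsum_from \<tau> G k (Suc n) = \<tau> (G k) (tsum_from \<tau> G (Suc k) n)"

definition weak_conv :: "(nat \<Rightarrow> dfun) \<Rightarrow> dfun \<Rightarrow> bool" where
  "weak_conv Gs G \<longleftrightarrow>
     (\<forall>x::real. isCont (\<lambda>t. G (ereal t)) x \<longrightarrow> (\<lambda>n. Gs n (ereal x)) \<longlonglongrightarrow> G (ereal x))"

definition sigma_ring :: "'a set \<Rightarrow> 'a set set \<Rightarrow> bool" where
  "sigma_ring \<Omega> S \<longleftrightarrow> ring_of_sets \<Omega> S \<and> (\<forall>A::nat \<Rightarrow> 'a set. range A \<subseteq> S \<longrightarrow> (\<Union>n. A n) \<in> S)"

definition tau_decomposable :: "(dfun \<Rightarrow> dfun \<Rightarrow> dfun) \<Rightarrow> 'a set set \<Rightarrow> ('a set \<Rightarrow> dfun) \<Rightarrow> bool" where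
  "tau_decomposable \<tau> S \<gamma> \<longleftrightarrow>
     (\<forall>E\<in>S. \<gamma> E \<in> Delta_plus) \<and> \<gamma> {} = eps0
   \<and> (\<forall>E\<in>S. \<forall>F\<in>S. E \<inter> F = {} \<longrightarrow> \<gamma> (E \<union> F) = \<tau> (\<gamma> E) (\<gamma> F))"

definition tau_sigma_additive :: "(dfun \<Rightarrow> dfun \<Rightarrow> dfun) \<Rightarrow> 'a set set \<Rightarrow> ('a set \<Rightarrow> dfun) \<Rightarrow> bool" where
  "tau_sigma_additive \<tau> S \<gamma> \<longleftrightarrow>
     (\<forall>E::nat \<Rightarrow> 'a set. range E \<subseteq> S \<longrightarrow> disjoint_family E \<longrightarrow>
        weak_conv (\<lambda>n. tsum_from \<tau> (\<lambda>k. \<gamma> (E k)) 0 n) (\<gamma> (\<Union>n. E n)))"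

end

theory Submission
  imports Defs
begin

text \<open>Write the increasing union as the disjoint union of the differences
  \<open>disjointed E n = E n - E (n - 1)\<close>. By decomposability the finite \<open>\<tau>\<close>-sum of the first
  \<open>n + 1\<close> differences is \<open>\<gamma>\<^sub>E\<^sub>n\<close>, so \<open>\<sigma>\<close>-additivity makes exactly the sequence \<open>\<gamma>\<^sub>E\<^sub>n\<close>
  converge weakly to \<open>\<gamma>\<^sub>E\<close>.\<close>

lemma weak_conv_Suc:
  assumes "weak_conv Gs G"
  shows "weak_conv (\<lambda>n. Gs (Suc n)) G"
  unfolding weak_conv_def
proof (intro allI impI)
  fix x :: real
  assume "isCont (\<lambda>t. G (ereal t)) x"
  then have "(\<lambda>n. Gs n (ereal x)) \<longlonglongrightarrow> G (ereal x)"
    using assms by (simp add: weak_conv_def)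
  then show "(\<lambda>n. Gs (Suc n) (ereal x)) \<longlonglongrightarrow> G (ereal x)"
    by (rule LIMSEQ_Suc)
qed

lemma tsum_from_tau_decomposable:
  assumes "ring_of_sets \<Omega> S" and "tau_decomposable \<tau> S \<gamma>"
    and "range D \<subseteq> S" and "disjoint_family D"
  shows "tsum_from \<tau> (\<lambda>i. \<gamma> (D i)) k n = \<gamma> (\<Union>i\<in>{k..<k+n}. D i)"
proof (induction n arbitrary: k)
  case 0
  then show ?case using assms(2) by (simp add: tau_decomposable_def)
next
  case (Suc n)
  have split: "(\<Union>i\<in>{k..<k + Suc n}. D i) = D k \<union> (\<Union>i\<in>{Suc k..<Suc k + n}. D i)"
    by (simp add: atLeastLessThanSuc_atLeastAtMost atLeastAtMost_insertL[symmetric])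
  have tail_in: "(\<Union>i\<in>{Suc k..<Suc k + n}. D i) \<in> S"
    using assms(3) by (intro ring_of_sets.finite_UN[OF assms(1)]) auto
  have disjoint_tail: "D k \<inter> (\<Union>i\<in>{Suc k..<Suc k + n}. D i) = {}"
    using assms(4) unfolding disjoint_family_on_def
    by (auto, metis Suc_le_eq disjoint_iff less_irrefl_nat)
  have "tsum_from \<tau> (\<lambda>i. \<gamma> (D i)) k (Suc n) = \<tau> (\<gamma> (D k)) (\<gamma> (\<Union>i\<in>{Suc k..<Suc k + n}. D i))"
    using Suc.IH by simp
  also have "\<dots> = \<gamma> (D k \<union> (\<Union>i\<in>{Suc k..<Suc k + n}. D i))"
    using assms(2,3) tail_in disjoint_tail unfolding tau_decomposable_def by (metis rangeI subsetD)
  finally show ?case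
    by (simp only: split)
qed

lemma UN_lessThan_Suc_incseq:
  assumes "incseq A"
  shows "(\<Union>i<Suc n. A i) = A n"
  using assms by (fastforce dest: incseqD simp: less_Suc_eq_le)

theorem lemma3p4:
  fixes \<tau> :: "dfun \<Rightarrow> dfun \<Rightarrow> dfun" and \<Omega> :: "'a set" and S :: "'a set set"
    and \<gamma> :: "'a set \<Rightarrow> dfun" and E :: "nat \<Rightarrow> 'a set" and E' :: "'a set"
  assumes "triangle_function \<tau>"
    and "\<Omega> \<noteq> {}"
    and "sigma_ring \<Omega> S"
    and "tau_decomposable \<tau> S \<gamma>"
    and "tau_sigma_additive \<tau> S \<gamma>"
    and "\<And>n. E n \<in> S"
    and "\<And>n. E n \<subseteq> E (Suc n)"
    and "(\<Union>n. E n) = E'"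
  shows "weak_conv (\<lambda>n. \<gamma> (E n)) (\<gamma> E')"
proof -
  have ring: "ring_of_sets \<Omega> S"
    using assms(3) by (simp add: sigma_ring_def)
  have inc: "incseq E"
    using assms(7) by (rule incseq_SucI)
  have range_D: "range (disjointed E) \<subseteq> S"
    using ring_of_sets.range_disjointed_sets[OF ring] assms(6) by blast
  have "weak_conv (\<lambda>n. tsum_from \<tau> (\<lambda>i. \<gamma> (disjointed E i)) 0 n) (\<gamma> E')"
    using assms(5) range_D disjoint_family_disjointed UN_disjointed_eq assms(8)
    unfolding tau_sigma_additive_def by metis
  moreover have "tsum_from \<tau> (\<lambda>i. \<gamma> (disjointed E i)) 0 (Suc n) = \<gamma> (E n)" for n
  proof -
    have "tsum_from \<tau> (\<lambda>i. \<gamma> (disjointed E i)) 0 (Suc n)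
        = \<gamma> (\<Union>i\<in>{0..<Suc n}. disjointed E i)"
      using tsum_from_tau_decomposable[OF ring assms(4) range_D disjoint_family_disjointed]
      by (simp del: tsum_from.simps)
    also have "\<dots> = \<gamma> (E n)"
      using finite_UN_disjointed_eq[of E "Suc n"] UN_lessThan_Suc_incseq[OF inc]
      by (simp add: atLeast0LessThan)
    finally show ?thesis .
  qed
  ultimately show ?thesis
    using weak_conv_Suc by fastforce
qed

end
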